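(* Let $C=w_1-\dots-w_m$ be a chain with $m\ge 2$ edges and positive weights. Then $C$ is extremal iff there is no admissible decomposition of $C$ into two subchains.
   Context: For a chain $C'=v_1-\dots-v_r$ ($r\ge 2$, positive weights): $L_1(C')=\max\{\sum_{i=1}^r v_ix_i : x\in\mathbb{R}^r,\ x_i^2+x_{i+1}^2\le 1\ \forall\,1\le i\le r-1\}$; $L_\emptyset(C')=\sqrt{(\sum_{i\text{ odd}}v_i)^2+(\sum_{i\text{ even}}v_i)^2}$; $C'$ is extremal if $L_1(C')=L_\emptyset(C')$. A decomposition of $C$ into $p+1$ subchains is given by integers $0=i_0<i_1<\dots<i_p<i_{p+1}=m$, with $C_j=w_{i_{j-1}+1}-\dots-w_{i_j}$. Let $\tilde\Sigma_{\rm odd}(C_j)=\sum\{w_i : i_{j-1}<i\le i_j,\ i\text{ odd}\}$, $\tilde\Sigma_{\rm even}(C_j)=\sum\{w_i : i_{j-1}<i\le i_j,\ i\text{ even}\}$ (parity with respect to the numbering in $C$), and $\Delta_j=\tilde\Sigma_{\rm even}(C_j)\tilde\Sigma_{\rm odd}(C_{j+1})-\tilde\Sigma_{\rm even}(C_{j+1})\tilde\Sigma_{\rm odd}(C_j)$ for $1\le j\le p$. The decomposition is admissible if every $C_j$ has at least two edges and, for every $1\le j\le p$, $\Delta_j<0$ when $i_j$ is even and $\Delta_j>0$ when $i_j$ is odd. *)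

theory Defs
  imports Complex_Main
begin

text \<open>A chain v_1 - ... - v_r is represented by a weight function v :: nat => real
  (only the values at indices 1..r matter) together with its number of edges r.\<close>

definition L1 :: "(nat \<Rightarrow> real) \<Rightarrow> nat \<Rightarrow> real" where
  "L1 v r = Sup {(\<Sum>i=1..r. v i * x i) | x :: nat \<Rightarrow> real.
                   \<forall>i. 1 \<le> i \<and> i \<le> r - 1 \<longrightarrow> (x i)\<^sup>2 + (x (i+1))\<^sup>2 \<le> 1}"

definition Lempty :: "(nat \<Rightarrow> real) \<Rightarrow> nat \<Rightarrow> real" where
  "Lempty v r = sqrt ((\<Sum>i\<in>{i\<in>{1..r}. odd i}. v i)\<^sup>2 + (\<Sum>i\<in>{i\<in>{1..r}. even i}. v i)\<^sup>2)"

definition extremal :: "(nat \<Rightarrow> real) \<Rightarrow> nat \<Rightarrow> bool" where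
  "extremal v r \<longleftrightarrow> L1 v r = Lempty v r"

text \<open>Parity sums of the subchain C_j = w_{a+1} - ... - w_b, parity taken w.r.t. the numbering in C.\<close>

definition sigma_odd :: "(nat \<Rightarrow> real) \<Rightarrow> nat \<Rightarrow> nat \<Rightarrow> real" where
  "sigma_odd w a b = (\<Sum>i\<in>{i\<in>{a<..b}. odd i}. w i)"

definition sigma_even :: "(nat \<Rightarrow> real) \<Rightarrow> nat \<Rightarrow> nat \<Rightarrow> real" where
  "sigma_even w a b = (\<Sum>i\<in>{i\<in>{a<..b}. even i}. w i)"

text \<open>Decomposition of C = w_1 - ... - w_m into p+1 subchains, given by cut points
  0 = c 0 < c 1 < ... < c p < c (p+1) = m; subchain C_j is indexed by {c (j-1) <.. c j}.\<close>

definition Delta :: "(nat \<Rightarrow> real) \<Rightarrow> (nat \<Rightarrow> nat) \<Rightarrow> nat \<Rightarrow> real" where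
  "Delta w c j = sigma_even w (c (j-1)) (c j) * sigma_odd w (c j) (c (j+1))
               - sigma_even w (c j) (c (j+1)) * sigma_odd w (c (j-1)) (c j)"

definition admissible_decomp :: "(nat \<Rightarrow> real) \<Rightarrow> nat \<Rightarrow> nat \<Rightarrow> (nat \<Rightarrow> nat) \<Rightarrow> bool" where
  "admissible_decomp w m p c \<longleftrightarrow>
     c 0 = 0 \<and> c (p+1) = m \<and> (\<forall>j\<le>p. c j < c (j+1)) \<and>
     (\<forall>j\<in>{1..p+1}. c j - c (j-1) \<ge> 2) \<and>
     (\<forall>j\<in>{1..p}. (even (c j) \<longrightarrow> Delta w c j < 0) \<and> (odd (c j) \<longrightarrow> Delta w c j > 0))"

end

theory Submission
  imports Defs
begin

(*
  Let O and E be the sums of the odd- and even-indexed weights and L = sqrt (O^2 + E^2) = L_empty.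
  The vector equal to O/L on odd and E/L on even indices is feasible with value L, so always
  L_empty <= L_1.  If a cut k is admissible, normalising this construction separately on the two
  pieces stays feasible across the cut (this is exactly what the sign of Delta guarantees), and by
  the strict triangle inequality its value exceeds L_empty.  If no cut is admissible, the
  multipliers lambda_k = L / (2 O E) * (-1)^k * Delta_k are nonnegative and form a dual
  certificate: weighting 2 y_i x_i <= y_i^2 + x_i^2 by lambda_(i-1) + lambda_i and regrouping
  along the constraints bounds every feasible value by L.
*)

definition feasible :: "nat \<Rightarrow> (nat \<Rightarrow> real) \<Rightarrow> bool" where
  "feasible r x \<longleftrightarrow> (\<forall>i. 1 \<le> i \<and> i \<le> r - 1 \<longrightarrow> (x i)\<^sup>2 + (x (i+1))\<^sup>2 \<le> 1)"

lemma L1_eq_Sup: "L1 v r = Sup {(\<Sum>i=1..r. v i * x i) | x. feasible r x}"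
  unfolding L1_def feasible_def ..

lemma feasible_abs_le_1:
  assumes "2 \<le> r" "feasible r x" "i \<in> {1..r}"
  shows "\<bar>x i\<bar> \<le> 1"
proof -
  obtain j where "j \<in> {1..r-1}" and "i = j \<or> i = j + 1"
  proof (cases "i = r")
    case True
    then show ?thesis
      using assms(1) that[of "r - 1"] by auto
  next
    case False
    then show ?thesis
      using assms(3) that[of i] by auto
  qed
  moreover have "(x j)\<^sup>2 + (x (j+1))\<^sup>2 \<le> 1"
    using assms(2) \<open>j \<in> {1..r-1}\<close> unfolding feasible_def by auto
  ultimately have "(x i)\<^sup>2 \<le> 1"
    by (auto intro: order_trans[rotated] simp: add_increasing add_increasing2)
  then show ?thesis
    by (simp add: abs_square_le_1)
qed

lemma bdd_above_chain_values:
  assumes "2 \<le> r"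
  shows "bdd_above {(\<Sum>i=1..r. v i * x i) | x. feasible r x}"
proof (rule bdd_aboveI)
  fix s assume "s \<in> {(\<Sum>i=1..r. v i * x i) | x. feasible r x}"
  then obtain x where s: "s = (\<Sum>i=1..r. v i * x i)" and "feasible r x"
    by blast
  have "v i * x i \<le> \<bar>v i\<bar>" if "i \<in> {1..r}" for i
  proof -
    have "v i * x i \<le> \<bar>v i\<bar> * \<bar>x i\<bar>"
      by (metis abs_ge_self abs_mult)
    also have "\<dots> \<le> \<bar>v i\<bar>"
      using feasible_abs_le_1[OF assms \<open>feasible r x\<close> that] by (simp add: mult_left_le)
    finally show ?thesis .
  qed
  then show "s \<le> (\<Sum>i=1..r. \<bar>v i\<bar>)"
    unfolding s by (rule sum_mono)
qed

lemma L1_upper: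
  assumes "2 \<le> r" "feasible r x"
  shows "(\<Sum>i=1..r. v i * x i) \<le> L1 v r"
  unfolding L1_eq_Sup using assms by (intro cSup_upper bdd_above_chain_values) auto

lemma L1_least:
  assumes "\<And>x. feasible r x \<Longrightarrow> (\<Sum>i=1..r. v i * x i) \<le> B"
  shows "L1 v r \<le> B"
proof -
  have "feasible r (\<lambda>_. 0)"
    unfolding feasible_def by simp
  then show ?thesis
    unfolding L1_eq_Sup using assms by (intro cSup_least) auto
qed

lemma sum_adjacent_telescope:
  fixes l y :: "nat \<Rightarrow> real"
  assumes "l 0 = 0"
  shows "(\<Sum>i=1..n. (l (i - 1) + l i) * y i) = (\<Sum>k=1..n-1. l k * (y k + y (k + 1))) + l n * y n"
proof (induction n)
  case (Suc n)
  show ?case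
  proof (cases n)
    case (Suc n')
    then have "(\<Sum>k=1..Suc n - 1. l k * (y k + y (k + 1)))
        = (\<Sum>k=1..n-1. l k * (y k + y (k + 1))) + l n * (y n + y (n + 1))"
      by simp
    then show ?thesis
      using Suc.IH by (simp add: algebra_simps)
  qed (simp add: assms)
qed (simp add: assms)

lemma L1_le_of_dual_certificate:
  fixes lam y :: "nat \<Rightarrow> real"
  assumes "lam 0 = 0" "lam r = 0" "\<forall>k\<in>{1..r-1}. lam k \<ge> 0"
    and tight: "\<forall>k\<in>{1..r-1}. (y k)\<^sup>2 + (y (k + 1))\<^sup>2 = 1"
    and weights: "\<forall>i\<in>{1..r}. v i = 2 * (lam (i - 1) + lam i) * y i"
  shows "L1 v r \<le> (\<Sum>i=1..r. v i * y i)"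
proof (rule L1_least)
  define \<mu> where "\<mu> i = lam (i - 1) + lam i" for i
  have \<mu>_nonneg: "\<mu> i \<ge> 0" if "i \<in> {1..r}" for i
  proof -
    have "lam (i - 1) \<ge> 0"
    proof (cases "i = 1")
      case False
      with that have "i - 1 \<in> {1..r-1}"
        by auto
      then show ?thesis
        using assms(3) by blast
    qed (simp add: assms(1))
    moreover have "lam i \<ge> 0"
    proof (cases "i = r")
      case False
      with that have "i \<in> {1..r-1}"
        by auto
      then show ?thesis
        using assms(3) by blast
    qed (simp add: assms(2))
    ultimately show ?thesis
      unfolding \<mu>_def by simp
  qed
  have telescope: "(\<Sum>i=1..r. \<mu> i * f i) = (\<Sum>k=1..r-1. lam k * (f k + f (k + 1)))" for f
    unfolding \<mu>_def using sum_adjacent_telescope[of lam f r] assms(1,2) by simp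
  have "(\<Sum>i=1..r. v i * y i) = 2 * (\<Sum>i=1..r. \<mu> i * (y i)\<^sup>2)"
    using weights unfolding \<mu>_def sum_distrib_left by (intro sum.cong) (simp_all add: power2_eq_square)
  also have "(\<Sum>i=1..r. \<mu> i * (y i)\<^sup>2) = (\<Sum>k=1..r-1. lam k)"
    using tight unfolding telescope by simp
  finally have value_y: "(\<Sum>i=1..r. v i * y i) = 2 * (\<Sum>k=1..r-1. lam k)" .
  fix x assume "feasible r x"
  have "(\<Sum>i=1..r. v i * x i) \<le> (\<Sum>i=1..r. \<mu> i * (y i)\<^sup>2 + \<mu> i * (x i)\<^sup>2)"
  proof (rule sum_mono)
    fix i assume i: "i \<in> {1..r}"
    have "2 * y i * x i \<le> (y i)\<^sup>2 + (x i)\<^sup>2"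
      using sum_squares_bound[of "y i" "x i"] by (simp add: power2_eq_square)
    then have "\<mu> i * (2 * y i * x i) \<le> \<mu> i * ((y i)\<^sup>2 + (x i)\<^sup>2)"
      using \<mu>_nonneg[OF i] by (rule mult_left_mono)
    then show "v i * x i \<le> \<mu> i * (y i)\<^sup>2 + \<mu> i * (x i)\<^sup>2"
      using weights i unfolding \<mu>_def by (simp add: algebra_simps)
  qed
  also have "\<dots> = (\<Sum>k=1..r-1. lam k) + (\<Sum>k=1..r-1. lam k * ((x k)\<^sup>2 + (x (k + 1))\<^sup>2))"
    using tight unfolding sum.distrib telescope by simp
  also have "(\<Sum>k=1..r-1. lam k * ((x k)\<^sup>2 + (x (k + 1))\<^sup>2)) \<le> (\<Sum>k=1..r-1. lam k)"
    using assms(3) \<open>feasible r x\<close> unfolding feasible_def by (intro sum_mono mult_left_le) auto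
  finally show "(\<Sum>i=1..r. v i * x i) \<le> (\<Sum>i=1..r. v i * y i)"
    unfolding value_y by simp
qed

lemma sigma_split:
  assumes "a \<le> b" "b \<le> c"
  shows "sigma_odd w a c = sigma_odd w a b + sigma_odd w b c"
    and "sigma_even w a c = sigma_even w a b + sigma_even w b c"
proof -
  have "sum w {i\<in>{a<..c}. P i} = sum w {i\<in>{a<..b}. P i} + sum w {i\<in>{b<..c}. P i}"
    for P :: "nat \<Rightarrow> bool"
  proof -
    have "{i\<in>{a<..c}. P i} = {i\<in>{a<..b}. P i} \<union> {i\<in>{b<..c}. P i}"
      using assms by auto
    moreover have "{i\<in>{a<..b}. P i} \<inter> {i\<in>{b<..c}. P i} = {}"
      by auto
    ultimately show ?thesis
      by (simp add: sum.union_disjoint)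
  qed
  then show "sigma_odd w a c = sigma_odd w a b + sigma_odd w b c"
    and "sigma_even w a c = sigma_even w a b + sigma_even w b c"
    unfolding sigma_odd_def sigma_even_def by simp_all
qed

lemma sigma_empty [simp]: "sigma_odd w a a = 0" "sigma_even w a a = 0"
  unfolding sigma_odd_def sigma_even_def by simp_all

lemma sigma_Suc:
  assumes "a \<le> b"
  shows "sigma_odd w a (Suc b) = sigma_odd w a b + (if odd (Suc b) then w (Suc b) else 0)"
    and "sigma_even w a (Suc b) = sigma_even w a b + (if even (Suc b) then w (Suc b) else 0)"
proof -
  have "{b<..Suc b} = {Suc b}"
    by auto
  then have "{i\<in>{b<..Suc b}. P i} = (if P (Suc b) then {Suc b} else {})" for P :: "nat \<Rightarrow> bool"
    by auto
  then have "sigma_odd w b (Suc b) = (if odd (Suc b) then w (Suc b) else 0)"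
    and "sigma_even w b (Suc b) = (if even (Suc b) then w (Suc b) else 0)"
    unfolding sigma_odd_def sigma_even_def by simp_all
  then show "sigma_odd w a (Suc b) = sigma_odd w a b + (if odd (Suc b) then w (Suc b) else 0)"
    and "sigma_even w a (Suc b) = sigma_even w a b + (if even (Suc b) then w (Suc b) else 0)"
    using sigma_split[OF assms le_SucI[OF order_refl], of w] by simp_all
qed

lemma sigma_pos:
  assumes "a + 2 \<le> b" "\<forall>i\<in>{a<..b}. w i > 0"
  shows "sigma_odd w a b > 0" "sigma_even w a b > 0"
proof -
  have "a + 1 \<in> {a<..b}" "a + 2 \<in> {a<..b}"
    using assms(1) by auto
  moreover have "odd (a + 1) \<or> odd (a + 2)" "even (a + 1) \<or> even (a + 2)"
    by auto
  ultimately have "{i\<in>{a<..b}. odd i} \<noteq> {}" "{i\<in>{a<..b}. even i} \<noteq> {}"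
    by blast+
  then show "sigma_odd w a b > 0" "sigma_even w a b > 0"
    unfolding sigma_odd_def sigma_even_def using assms(2) by (auto intro: sum_pos)
qed

definition alternating :: "real \<Rightarrow> real \<Rightarrow> nat \<Rightarrow> real" where
  "alternating p q i = (if odd i then p else q)"

lemma alternating_adjacent: "(alternating p q i)\<^sup>2 + (alternating p q (Suc i))\<^sup>2 = p\<^sup>2 + q\<^sup>2"
  unfolding alternating_def by simp

lemma sum_alternating:
  "(\<Sum>i\<in>{a<..b}. w i * alternating p q i) = p * sigma_odd w a b + q * sigma_even w a b"
proof -
  have "(\<Sum>i\<in>{a<..b}. w i * alternating p q i) = (\<Sum>i\<in>{a<..b}. if odd i then p * w i else q * w i)"
    by (rule sum.cong) (simp_all add: alternating_def)
  also have "\<dots> = (\<Sum>i\<in>{a<..b} \<inter> {i. odd i}. p * w i)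
                    + (\<Sum>i\<in>{a<..b} \<inter> - {i. odd i}. q * w i)"
    by (rule sum.If_cases) simp
  also have "{a<..b} \<inter> {i. odd i} = {i\<in>{a<..b}. odd i}"
    by auto
  also have "{a<..b} \<inter> - {i. odd i} = {i\<in>{a<..b}. even i}"
    by auto
  finally show ?thesis
    unfolding sigma_odd_def sigma_even_def by (simp add: sum_distrib_left)
qed

definition piece_norm :: "(nat \<Rightarrow> real) \<Rightarrow> nat \<Rightarrow> nat \<Rightarrow> real" where
  "piece_norm w a b = sqrt ((sigma_odd w a b)\<^sup>2 + (sigma_even w a b)\<^sup>2)"

definition piece_direction :: "(nat \<Rightarrow> real) \<Rightarrow> nat \<Rightarrow> nat \<Rightarrow> nat \<Rightarrow> real" where
  "piece_direction w a b =
     alternating (sigma_odd w a b / piece_norm w a b) (sigma_even w a b / piece_norm w a b)"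

lemma Lempty_eq_piece_norm: "Lempty v r = piece_norm v 0 r"
proof -
  have "{1..r} = {0<..r}"
    by auto
  then show ?thesis
    unfolding Lempty_def piece_norm_def sigma_odd_def sigma_even_def by simp
qed

lemma normalized_sq_sum:
  fixes a b :: real
  shows "(a / sqrt (a\<^sup>2 + b\<^sup>2))\<^sup>2 + (b / sqrt (a\<^sup>2 + b\<^sup>2))\<^sup>2
           = (if a = 0 \<and> b = 0 then 0 else 1)"
proof (cases "a = 0 \<and> b = 0")
  case False
  then have "a\<^sup>2 + b\<^sup>2 > 0"
    by (auto intro: add_pos_nonneg add_nonneg_pos)
  then show ?thesis
    using False by (simp add: power_divide add_divide_distrib[symmetric])
qed simp

lemma piece_direction_adjacent:
  "(piece_direction w a b i)\<^sup>2 + (piece_direction w a b (Suc i))\<^sup>2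
     = (if sigma_odd w a b = 0 \<and> sigma_even w a b = 0 then 0 else 1)"
  unfolding piece_direction_def alternating_adjacent piece_norm_def by (rule normalized_sq_sum)

lemma sum_piece_direction: "(\<Sum>i\<in>{a<..b}. w i * piece_direction w a b i) = piece_norm w a b"
proof -
  have "(\<Sum>i\<in>{a<..b}. w i * piece_direction w a b i)
      = ((sigma_odd w a b)\<^sup>2 + (sigma_even w a b)\<^sup>2) / piece_norm w a b"
    unfolding piece_direction_def sum_alternating by (simp add: power2_eq_square add_divide_distrib)
  then show ?thesis
    unfolding piece_norm_def by (simp add: real_div_sqrt)
qed

lemma sum_piece_direction_chain: "(\<Sum>i=1..r. v i * piece_direction v 0 r i) = Lempty v r"
proof -
  have "{1..r} = {0<..r}"
    by auto
  then show ?thesis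
    using sum_piece_direction[of v 0 r] by (simp add: Lempty_eq_piece_norm)
qed

lemma Lempty_le_L1:
  assumes "2 \<le> r"
  shows "Lempty v r \<le> L1 v r"
proof -
  have "feasible r (piece_direction v 0 r)"
    unfolding feasible_def using piece_direction_adjacent[of v 0 r] by simp
  then show ?thesis
    using L1_upper[OF assms] sum_piece_direction_chain by metis
qed

lemma normalized_junction_le_1:
  fixes a1 b1 a2 b2 :: real
  assumes "a1 > 0" "b1 > 0" "a2 > 0" "b2 > 0" "b1 * a2 \<le> b2 * a1"
  shows "(b1 / sqrt (a1\<^sup>2 + b1\<^sup>2))\<^sup>2 + (a2 / sqrt (a2\<^sup>2 + b2\<^sup>2))\<^sup>2 \<le> 1"
proof -
  have N1: "a1\<^sup>2 + b1\<^sup>2 > 0" and N2: "a2\<^sup>2 + b2\<^sup>2 > 0"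
    using assms by (simp_all add: add_pos_pos)
  have "(b1 * a2)\<^sup>2 \<le> (b2 * a1)\<^sup>2"
    using assms by (intro power_mono) auto
  then have "b1\<^sup>2 * (a2\<^sup>2 + b2\<^sup>2) + a2\<^sup>2 * (a1\<^sup>2 + b1\<^sup>2)
      \<le> (a1\<^sup>2 + b1\<^sup>2) * (a2\<^sup>2 + b2\<^sup>2)"
    by (simp add: power_mult_distrib algebra_simps)
  moreover have "b1\<^sup>2 / (a1\<^sup>2 + b1\<^sup>2) + a2\<^sup>2 / (a2\<^sup>2 + b2\<^sup>2)
      = (b1\<^sup>2 * (a2\<^sup>2 + b2\<^sup>2) + a2\<^sup>2 * (a1\<^sup>2 + b1\<^sup>2))
          / ((a1\<^sup>2 + b1\<^sup>2) * (a2\<^sup>2 + b2\<^sup>2))"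
    using N1 N2 by (intro add_frac_eq) auto
  ultimately have "b1\<^sup>2 / (a1\<^sup>2 + b1\<^sup>2) + a2\<^sup>2 / (a2\<^sup>2 + b2\<^sup>2) \<le> 1"
    using N1 N2 by (simp add: pos_divide_le_eq)
  then show ?thesis
    by (simp add: power_divide)
qed

lemma sqrt_sum_sq_add_less:
  fixes a1 b1 a2 b2 :: real
  assumes "a1 * b2 \<noteq> a2 * b1"
  shows "sqrt ((a1 + a2)\<^sup>2 + (b1 + b2)\<^sup>2) < sqrt (a1\<^sup>2 + b1\<^sup>2) + sqrt (a2\<^sup>2 + b2\<^sup>2)"
proof -
  \<comment> \<open>Lagrange's identity makes Cauchy-Schwarz strict for non-parallel vectors.\<close>
  have "(a1 * a2 + b1 * b2)\<^sup>2 + (a1 * b2 - a2 * b1)\<^sup>2 = (a1\<^sup>2 + b1\<^sup>2) * (a2\<^sup>2 + b2\<^sup>2)"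
    by (simp add: power2_eq_square algebra_simps)
  moreover have "(a1 * b2 - a2 * b1)\<^sup>2 > 0"
    using assms by simp
  ultimately have "(a1 * a2 + b1 * b2)\<^sup>2 < (a1\<^sup>2 + b1\<^sup>2) * (a2\<^sup>2 + b2\<^sup>2)"
    by linarith
  then have "a1 * a2 + b1 * b2 < sqrt (a1\<^sup>2 + b1\<^sup>2) * sqrt (a2\<^sup>2 + b2\<^sup>2)"
    unfolding real_sqrt_mult[symmetric] by (rule real_less_rsqrt)
  then have "(a1 + a2)\<^sup>2 + (b1 + b2)\<^sup>2 < (sqrt (a1\<^sup>2 + b1\<^sup>2) + sqrt (a2\<^sup>2 + b2\<^sup>2))\<^sup>2"
    by (simp add: power2_sum)
  then show ?thesis
    by (intro real_less_lsqrt) auto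
qed

definition split_Delta :: "(nat \<Rightarrow> real) \<Rightarrow> nat \<Rightarrow> nat \<Rightarrow> real" where
  "split_Delta w k m = sigma_even w 0 k * sigma_odd w k m - sigma_even w k m * sigma_odd w 0 k"

lemma Delta_eq_split_Delta: "c 0 = 0 \<Longrightarrow> Delta w c 1 = split_Delta w (c 1) (c 2)"
  unfolding Delta_def split_Delta_def by (simp add: numeral_2_eq_2)

lemma parity_sign_conditions_iff:
  "((even k \<longrightarrow> D < 0) \<and> (odd k \<longrightarrow> D > 0)) \<longleftrightarrow> (-1) ^ k * (D :: real) < 0"
  by (cases "even k") auto

definition admissible_cut :: "(nat \<Rightarrow> real) \<Rightarrow> nat \<Rightarrow> nat \<Rightarrow> bool" where
  "admissible_cut w m k \<longleftrightarrow> 2 \<le> k \<and> k + 2 \<le> m \<and> (-1) ^ k * split_Delta w k m < 0"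

lemma admissible_decomp_two_iff: "(\<exists>c. admissible_decomp w m 1 c) \<longleftrightarrow> (\<exists>k. admissible_cut w m k)"
proof
  assume "\<exists>c. admissible_decomp w m 1 c"
  then obtain c where c: "admissible_decomp w m 1 c" ..
  then have c0: "c 0 = 0" and c2: "c 2 = m" and gaps: "\<forall>j\<in>{1..2}. 2 \<le> c j - c (j - 1)"
    unfolding admissible_decomp_def by (simp_all add: numeral_2_eq_2)
  have "(even (c 1) \<longrightarrow> Delta w c 1 < 0) \<and> (odd (c 1) \<longrightarrow> Delta w c 1 > 0)"
    using c unfolding admissible_decomp_def by simp
  then have "(-1) ^ c 1 * split_Delta w (c 1) m < 0"
    unfolding parity_sign_conditions_iff Delta_eq_split_Delta[of c, OF c0] c2 .
  moreover have "2 \<le> c 1" "c 1 + 2 \<le> m"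
    using gaps[rule_format, of 1] gaps[rule_format, of 2] c0 c2 by simp_all
  ultimately show "\<exists>k. admissible_cut w m k"
    unfolding admissible_cut_def by blast
next
  assume "\<exists>k. admissible_cut w m k"
  then obtain k where k: "2 \<le> k" "k + 2 \<le> m" "(-1) ^ k * split_Delta w k m < 0"
    unfolding admissible_cut_def by blast
  define c :: "nat \<Rightarrow> nat" where "c j = (if j = 0 then 0 else if j = 1 then k else m)" for j
  have c: "c 0 = 0" "c 1 = k" "c 2 = m"
    unfolding c_def by simp_all
  then have "Delta w c 1 = split_Delta w k m"
    using Delta_eq_split_Delta[of c] by simp
  then have "(even (c 1) \<longrightarrow> Delta w c 1 < 0) \<and> (odd (c 1) \<longrightarrow> Delta w c 1 > 0)"
    unfolding parity_sign_conditions_iff c(2) using k(3) by simp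
  then have "admissible_decomp w m 1 c"
    using c k(1,2) unfolding admissible_decomp_def by (auto simp: le_Suc_eq numeral_2_eq_2)
  then show "\<exists>c. admissible_decomp w m 1 c"
    by blast
qed

lemma piece_norms_le_L1:
  assumes "2 \<le> k" "k + 2 \<le> m" "\<forall>i\<in>{1..m}. w i > 0" "(-1) ^ k * split_Delta w k m \<le> 0"
  shows "piece_norm w 0 k + piece_norm w k m \<le> L1 w m"
proof -
  define O1 E1 O2 E2
    where "O1 = sigma_odd w 0 k" and "E1 = sigma_even w 0 k"
      and "O2 = sigma_odd w k m" and "E2 = sigma_even w k m"
  have pos: "O1 > 0" "E1 > 0" "O2 > 0" "E2 > 0"
    unfolding O1_def E1_def O2_def E2_def using assms(1-3) by (auto intro!: sigma_pos)
  define x where "x i = (if i \<le> k then piece_direction w 0 k i else piece_direction w k m i)" for i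
  have junction: "(x k)\<^sup>2 + (x (Suc k))\<^sup>2 \<le> 1"
  proof (cases "even k")
    case True
    then have "E1 * O2 \<le> E2 * O1"
      using assms(4) unfolding split_Delta_def O1_def E1_def O2_def E2_def by simp
    from normalized_junction_le_1[OF pos this] True show ?thesis
      unfolding x_def piece_direction_def alternating_def piece_norm_def O1_def E1_def O2_def E2_def
      by simp
  next
    case False
    then have "O1 * E2 \<le> O2 * E1"
      using assms(4) unfolding split_Delta_def O1_def E1_def O2_def E2_def by (simp add: mult.commute)
    from normalized_junction_le_1[OF pos(2,1,4,3) this] False show ?thesis
      unfolding x_def piece_direction_def alternating_def piece_norm_def O1_def E1_def O2_def E2_def
      by (simp add: add.commute)
  qed
  have "feasible m x"
    unfolding feasible_def
  proof (intro allI impI)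
    fix i assume "1 \<le> i \<and> i \<le> m - 1"
    consider "i + 1 \<le> k" | "i = k" | "k < i" by linarith
    then show "(x i)\<^sup>2 + (x (i+1))\<^sup>2 \<le> 1"
    proof cases
      case 1
      then show ?thesis using piece_direction_adjacent[of w 0 k i] pos by (simp add: x_def O1_def)
    next
      case 2
      then show ?thesis using junction by simp
    next
      case 3
      then show ?thesis using piece_direction_adjacent[of w k m i] pos by (simp add: x_def O2_def)
    qed
  qed
  moreover have "(\<Sum>i=1..m. w i * x i) = piece_norm w 0 k + piece_norm w k m"
  proof -
    have "{1..m} = {0<..k} \<union> {k<..m}" "{0<..k} \<inter> {k<..m} = {}"
      using assms(2) by auto
    then have "(\<Sum>i=1..m. w i * x i) = (\<Sum>i\<in>{0<..k}. w i * x i) + (\<Sum>i\<in>{k<..m}. w i * x i)"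
      by (simp add: sum.union_disjoint)
    also have "\<dots> = (\<Sum>i\<in>{0<..k}. w i * piece_direction w 0 k i)
                      + (\<Sum>i\<in>{k<..m}. w i * piece_direction w k m i)"
      unfolding x_def by (intro arg_cong2[where f = "(+)"] sum.cong) auto
    finally show ?thesis
      unfolding sum_piece_direction .
  qed
  ultimately show ?thesis
    using L1_upper[of m x w] assms(1,2) by simp
qed

lemma Lempty_less_L1_if_admissible_cut:
  assumes "admissible_cut w m k" "\<forall>i\<in>{1..m}. w i > 0"
  shows "Lempty w m < L1 w m"
proof -
  have k: "2 \<le> k" "k + 2 \<le> m" "(-1) ^ k * split_Delta w k m < 0"
    using assms(1) unfolding admissible_cut_def by simp_all
  then have "split_Delta w k m \<noteq> 0"
    by auto
  then have "piece_norm w 0 m < piece_norm w 0 k + piece_norm w k m"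
    using sqrt_sum_sq_add_less[of "sigma_odd w 0 k" "sigma_even w k m" "sigma_odd w k m" "sigma_even w 0 k"]
      sigma_split[of 0 k m w] k(2)
    unfolding piece_norm_def split_Delta_def by (simp add: mult.commute)
  also have "\<dots> \<le> L1 w m"
    using k assms(2) by (intro piece_norms_le_L1) auto
  finally show ?thesis
    unfolding Lempty_eq_piece_norm .
qed

lemma split_Delta_eq:
  assumes "k \<le> m"
  shows "split_Delta w k m = sigma_even w 0 k * sigma_odd w 0 m - sigma_even w 0 m * sigma_odd w 0 k"
  using sigma_split[OF le0 assms, of w] unfolding split_Delta_def by (simp add: algebra_simps)

lemma split_Delta_Suc:
  assumes "Suc j \<le> m"
  shows "(-1) ^ Suc j * split_Delta w (Suc j) m + (-1) ^ j * split_Delta w j m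
       = w (Suc j) * (if odd (Suc j) then sigma_even w 0 m else sigma_odd w 0 m)"
  using assms sigma_Suc[of 0 j w]
  by (cases "even j") (simp_all add: split_Delta_eq algebra_simps)

lemma L1_le_Lempty_if_no_admissible_cut:
  assumes "2 \<le> m" "\<forall>i\<in>{1..m}. w i > 0" "\<not> (\<exists>k. admissible_cut w m k)"
  shows "L1 w m \<le> Lempty w m"
proof -
  define Od Ev N where "Od = sigma_odd w 0 m" and "Ev = sigma_even w 0 m" and "N = piece_norm w 0 m"
  have pos: "Od > 0" "Ev > 0"
    unfolding Od_def Ev_def using assms(1,2) by (auto intro!: sigma_pos)
  then have "N > 0"
    unfolding N_def piece_norm_def Od_def[symmetric] Ev_def[symmetric] by (simp add: add_pos_pos)
  define lam where "lam k = N / (2 * Od * Ev) * ((-1) ^ k * split_Delta w k m)" for k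
  have lam_boundary: "lam 0 = 0" "lam m = 0"
    unfolding lam_def split_Delta_def by simp_all
  have lam_adjacent: "lam (i - 1) + lam i = N / (2 * Od * Ev) * w i * (if odd i then Ev else Od)"
    if i: "i \<in> {1..m}" for i
  proof -
    obtain j where "i = Suc j"
      using i by (cases i) auto
    then show ?thesis
      using split_Delta_Suc[of j m w] i unfolding lam_def Od_def Ev_def
      by (simp add: algebra_simps)
  qed
  then have adjacent_pos: "lam (i - 1) + lam i > 0" if "i \<in> {1..m}" for i
    using that assms(2) pos \<open>N > 0\<close> by simp
  have lam_nonneg: "lam k \<ge> 0" if k: "k \<in> {1..m-1}" for k
  proof -
    have "1 \<le> k" "k \<le> m - 1"
      using k by simp_all
    then consider "k = 1" | "k = m - 1" | "2 \<le> k \<and> k + 2 \<le> m"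
      by linarith
    then show ?thesis
    proof cases
      case 1
      then show ?thesis
        using adjacent_pos[of 1] lam_boundary assms(1) by simp
    next
      case 2
      then show ?thesis
        using adjacent_pos[of m] lam_boundary assms(1) by simp
    next
      case 3
      then show ?thesis
        using assms(3) pos \<open>N > 0\<close> unfolding lam_def admissible_cut_def by (simp add: not_less)
    qed
  qed
  have tight: "(piece_direction w 0 m k)\<^sup>2 + (piece_direction w 0 m (k + 1))\<^sup>2 = 1" for k
    using piece_direction_adjacent[of w 0 m k] pos(1) unfolding Od_def by simp
  have weights: "w i = 2 * (lam (i - 1) + lam i) * piece_direction w 0 m i" if "i \<in> {1..m}" for i
    using pos \<open>N > 0\<close>
    unfolding lam_adjacent[OF that] piece_direction_def alternating_def
      Od_def[symmetric] Ev_def[symmetric] N_def[symmetric]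
    by (simp add: field_simps)
  have "L1 w m \<le> (\<Sum>i=1..m. w i * piece_direction w 0 m i)"
    by (intro L1_le_of_dual_certificate[OF lam_boundary] ballI lam_nonneg weights tight)
  then show ?thesis
    unfolding sum_piece_direction_chain .
qed

theorem mainTheorem9:
  fixes w :: "nat \<Rightarrow> real" and m :: nat
  assumes "m \<ge> 2"
    and "\<forall>i\<in>{1..m}. w i > 0"
  shows "extremal w m \<longleftrightarrow> \<not> (\<exists>c. admissible_decomp w m 1 c)"
proof -
  have "Lempty w m \<le> L1 w m"
    using assms(1) by (rule Lempty_le_L1)
  moreover have "Lempty w m < L1 w m" if "admissible_cut w m k" for k
    using that assms(2) by (rule Lempty_less_L1_if_admissible_cut)
  moreover have "L1 w m \<le> Lempty w m" if "\<not> (\<exists>k. admissible_cut w m k)"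
    using assms that by (rule L1_le_Lempty_if_no_admissible_cut)
  ultimately show ?thesis
    unfolding extremal_def admissible_decomp_two_iff by fastforce
qed

end
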